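(* Suppose Assumptions 1 and 2 hold. Then, uniformly over all $i,j\in[n]$, $$\left|\frac{\sigma^\star_i\sigma^\star_j}{\hat\sigma_i\hat\sigma_j}-1\right|=O_P\!\left(\frac{\log n}{\gamma}+\sqrt{\frac{\log n}{T\gamma}}\right).$$
   Context: Setup. Let $n,T$ be positive integers and $\mathbf Z^\star\in\mathbb R^{n\times T}$ a deterministic real matrix whose $i$-th row $\mathbf Z^\star_i\in\mathbb R^T$ is the $i$-th (true) time series. The observed data are $\mathbf Z=\mathbf Z^\star+\mathbf N$, where $\mathbf N\in\mathbb R^{n\times T}$ is random noise with rows $\mathbf N_1,\dots,\mathbf N_n$. Let $\mathbf M=\mathbf I-\frac1T\mathbf J\in\mathbb R^{T\times T}$ be the centering projection ($\mathbf J$ the all-ones matrix). Define the signal powers $\sigma^{\star2}_i=\frac1T\|\mathbf M\mathbf Z^\star_i\|^2$, assumed positive for all $i$, and their noisy versions $\hat\sigma_i^2=\frac1T\|\mathbf M\mathbf Z_i\|^2$; $\sigma^\star_i,\hat\sigma_i$ are the nonnegative square roots. Let $\boldsymbol\Sigma^\star=\operatorname{diag}(\sigma^{\star2}_1,\dots,\sigma^{\star2}_n)$ and $\mathbf R^\star=\frac1T(\boldsymbol\Sigma^\star)^{-1/2}\mathbf Z^\star\mathbf M\mathbf Z^{\star\top}(\boldsymbol\Sigma^\star)^{-1/2}$, which is positive semidefinite of rank $d$ with nonzero eigenvalues $\lambda^\star_1\ge\dots\ge\lambda^\star_d>0$; $\kappa=\lambda^\star_1/\lambda^\star_d$. Assumption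 1: the rows $\mathbf N_1,\dots,\mathbf N_n$ are mean zero and independent, $n=O(T)$, and each $\mathbf N_i$ is a $\nu_i$-subgaussian random vector (for every fixed unit vector $\mathbf u\in\mathbb R^T$, $\mathbf u^\top\mathbf N_i$ is $\nu_i$-subgaussian). Define $\gamma=\min_{i\in[n]}\sigma^{\star2}_i/\nu_i$. Assumption 2: $\lambda^\star_d$ is bounded away from zero, $\kappa=o(T)$, and $\kappa\log T/\gamma=o(1)$. Conventions: asymptotics are as $n,T\to\infty$; $O_P$ is the usual stochastic order symbol. *)

theory Defs
  imports "HOL-Probability.Probability" "Jordan_Normal_Form.Char_Poly" "HOL-Library.Landau_Symbols"
begin

definition centering :: "nat \<Rightarrow> nat \<Rightarrow> nat \<Rightarrow> real" where
  "centering T t s = (if t = s then 1 else 0) - 1 / real T"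

definition centered :: "nat \<Rightarrow> (nat \<Rightarrow> real) \<Rightarrow> nat \<Rightarrow> real" where
  "centered T x t = (\<Sum>s<T. centering T t s * x s)"

definition sig_power :: "nat \<Rightarrow> (nat \<Rightarrow> real) \<Rightarrow> real" where
  "sig_power T x = (1 / real T) * (\<Sum>t<T. (centered T x t)^2)"

text \<open>R* = (1/T) Sigma^(-1/2) Z M Z^T Sigma^(-1/2), for Z given by rows Z i.\<close>
definition corr_mat :: "nat \<Rightarrow> nat \<Rightarrow> (nat \<Rightarrow> nat \<Rightarrow> real) \<Rightarrow> real mat" where
  "corr_mat n T Z = mat n n (\<lambda>(i, j).
      (1 / real T) * (\<Sum>t<T. \<Sum>s<T. Z i t * centering T t s * Z j s)
      / (sqrt (sig_power T (Z i)) * sqrt (sig_power T (Z j))))"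

definition lam_max :: "real mat \<Rightarrow> real" where
  "lam_max A = Max {k. eigenvalue A k}"

definition lam_min_nz :: "real mat \<Rightarrow> real" where
  "lam_min_nz A = Min {k. eigenvalue A k \<and> k \<noteq> 0}"

definition cond_number :: "real mat \<Rightarrow> real" where
  "cond_number A = lam_max A / lam_min_nz A"

definition subgaussian :: "'a measure \<Rightarrow> ('a \<Rightarrow> real) \<Rightarrow> real \<Rightarrow> bool" where
  "subgaussian M X nu \<longleftrightarrow> X \<in> borel_measurable M \<and>
     (\<forall>s::real. integrable M (\<lambda>\<omega>. exp (s * X \<omega>)) \<and>
        (\<integral>\<omega>. exp (s * X \<omega>) \<partial>M) \<le> exp (nu * s^2 / 2))"

definition subgaussian_vec :: "'a measure \<Rightarrow> nat \<Rightarrow> ('a \<Rightarrow> nat \<Rightarrow> real) \<Rightarrow> real \<Rightarrow> bool" where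
  "subgaussian_vec M T X nu \<longleftrightarrow>
     (\<forall>u::nat \<Rightarrow> real. (\<Sum>t<T. (u t)^2) = 1 \<longrightarrow>
        subgaussian M (\<lambda>\<omega>. \<Sum>t<T. u t * X \<omega> t) nu)"

definition snr_gamma :: "nat \<Rightarrow> nat \<Rightarrow> (nat \<Rightarrow> nat \<Rightarrow> real) \<Rightarrow> (nat \<Rightarrow> real) \<Rightarrow> real" where
  "snr_gamma n T Z nu = Min ((\<lambda>i. sig_power T (Z i) / nu i) ` {..<n})"

end

theory Submission
  imports Defs "Jordan_Normal_Form.Schur_Decomposition"
begin

(* Write z for a true series, y for its noise and s = sig_power T z. Then
   sig_power T (z + y) / s - 1 = 2 <M z, y> / (T s) + |M y|^2 / (T s).
   The cross term is a subgaussian projection of y onto the unit vector M z / |M z|, so it is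
   O(sqrt (nu log n)) outside an event of probability 2 / n^2. The quadratic term is at most
   |y|^2 / T, whose moment of order p = ceil (log n) is controlled by the exponential moments of
   the coordinates, so it is O(nu log n) outside another such event. A union bound over the rows
   gives |hat sigma_i^2 / sigma*_i^2 - 1| <= 4 e^3 (log n / gamma + sqrt (log n / (T gamma))) for
   all i with probability at least 1 - 4 / n, and taking square roots at most doubles the bound.
   This rate tends to 0: R* has unit diagonal, so its trace n forces a nonzero eigenvalue and
   hence kappa >= 1, and with n = O(T) the hypothesis kappa log T / gamma -> 0 yields
   log n / gamma -> 0. *)

unbundle no vec_syntax

section \<open>Centring\<close>

lemma centered_eq_sub_mean:
  assumes "t < T"
  shows "centered T x t = x t - (\<Sum>s<T. x s) / real T"
proof -
  have "\<And>s. centering T t s * x s = (if t = s then x s else 0) - x s / real T"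
    by (simp add: centering_def algebra_simps)
  then have "centered T x t = (\<Sum>s<T. if t = s then x s else 0) - (\<Sum>s<T. x s / real T)"
    unfolding centered_def by (simp add: sum_subtractf)
  also have "\<dots> = x t - (\<Sum>s<T. x s) / real T"
    using assms by (simp add: sum_divide_distrib)
  finally show ?thesis .
qed

lemma sum_centered_eq_0:
  assumes "T > 0"
  shows "(\<Sum>t<T. centered T x t) = 0"
proof -
  have "(\<Sum>t<T. centered T x t) = (\<Sum>t<T. x t - (\<Sum>s<T. x s) / real T)"
    by (rule sum.cong) (auto simp: centered_eq_sub_mean)
  also have "\<dots> = 0"
    using assms by (simp add: sum_subtractf)
  finally show ?thesis .
qed

lemma centered_add: "centered T (\<lambda>t. x t + y t) t = centered T x t + centered T y t"
  unfolding centered_def by (simp add: algebra_simps sum.distrib)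

lemma sum_centered_mult_centered:
  assumes "T > 0"
  shows "(\<Sum>t<T. centered T x t * centered T y t) = (\<Sum>t<T. centered T x t * y t)"
proof -
  have "(\<Sum>t<T. centered T x t * centered T y t)
      = (\<Sum>t<T. centered T x t * y t - centered T x t * ((\<Sum>s<T. y s) / real T))"
    by (rule sum.cong) (auto simp: centered_eq_sub_mean[of _ T y] algebra_simps)
  also have "\<dots> = (\<Sum>t<T. centered T x t * y t)
      - (\<Sum>t<T. centered T x t) * ((\<Sum>s<T. y s) / real T)"
    by (simp add: sum_subtractf sum_distrib_right sum_divide_distrib)
  finally show ?thesis
    using sum_centered_eq_0[OF assms] by simp
qed

lemma sum_centered_sq_le:
  assumes "T > 0"
  shows "(\<Sum>t<T. (centered T y t)\<^sup>2) \<le> (\<Sum>t<T. (y t)\<^sup>2)"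
proof -
  define m where "m = (\<Sum>s<T. y s) / real T"
  have sum_y: "(\<Sum>s<T. y s) = real T * m"
    using assms by (simp add: m_def)
  have "(\<Sum>t<T. (centered T y t)\<^sup>2) = (\<Sum>t<T. (y t)\<^sup>2 - 2 * m * y t + m\<^sup>2)"
    by (rule sum.cong) (auto simp: centered_eq_sub_mean m_def power2_eq_square algebra_simps)
  also have "\<dots> = (\<Sum>t<T. (y t)\<^sup>2) - 2 * m * (\<Sum>t<T. y t) + real T * m\<^sup>2"
    by (simp add: sum.distrib sum_subtractf sum_distrib_left)
  also have "\<dots> = (\<Sum>t<T. (y t)\<^sup>2) - real T * m\<^sup>2"
    unfolding sum_y by (simp add: power2_eq_square)
  finally show ?thesis
    by simp
qed

lemma sig_power_add:
  assumes "T > 0"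
  shows "sig_power T (\<lambda>t. x t + y t) = sig_power T x
     + 2 / real T * (\<Sum>t<T. centered T x t * y t) + 1 / real T * (\<Sum>t<T. (centered T y t)\<^sup>2)"
  unfolding sig_power_def centered_add sum_centered_mult_centered[OF assms, of x y, symmetric]
  by (simp add: power2_eq_square algebra_simps sum.distrib sum_distrib_left)

lemma sum_centering_bilinear:
  assumes "T > 0"
  shows "(\<Sum>t<T. \<Sum>s<T. x t * centering T t s * y s) = (\<Sum>t<T. centered T x t * centered T y t)"
proof -
  have "(\<Sum>t<T. \<Sum>s<T. x t * centering T t s * y s) = (\<Sum>t<T. x t * centered T y t)"
    by (simp add: centered_def sum_distrib_left mult.assoc)
  also have "\<dots> = (\<Sum>t<T. centered T y t * x t)"
    by (simp add: mult.commute)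
  also have "\<dots> = (\<Sum>t<T. centered T y t * centered T x t)"
    by (rule sum_centered_mult_centered[OF assms, of y x, symmetric])
  finally show ?thesis
    by (simp add: mult.commute)
qed


section \<open>Subgaussian tail bounds\<close>

lemma subgaussian_vec_coordinate:
  assumes "subgaussian_vec M T X nu" and "t0 < T"
  shows "subgaussian M (\<lambda>\<omega>. X \<omega> t0) nu"
proof -
  define e where "e t = (if t = t0 then 1 else 0 :: real)" for t
  have "(\<Sum>t<T. (e t)\<^sup>2) = 1"
    using assms(2) by (simp add: e_def if_distrib[of "\<lambda>x. x\<^sup>2"] cong: if_cong)
  then have "subgaussian M (\<lambda>\<omega>. \<Sum>t<T. e t * X \<omega> t) nu"
    using assms(1) unfolding subgaussian_vec_def by blast
  moreover have "(\<lambda>\<omega>. \<Sum>t<T. e t * X \<omega> t) = (\<lambda>\<omega>. X \<omega> t0)"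
    using assms(2) by (simp add: e_def if_distrib[of "\<lambda>x. x * _"] cong: if_cong)
  ultimately show ?thesis
    by simp
qed

lemma exp_abs_le_exp_plus_exp_uminus:
  fixes y :: real
  shows "exp \<bar>y\<bar> \<le> exp y + exp (- y)"
  using exp_gt_zero[of y] exp_gt_zero[of "- y"] by (cases "y \<ge> 0") auto

lemma subgaussian_two_sided_exp:
  assumes "subgaussian M X nu"
  shows "integrable M (\<lambda>\<omega>. exp (s * X \<omega>) + exp (- (s * X \<omega>)))"
    and "(\<integral>\<omega>. exp (s * X \<omega>) + exp (- (s * X \<omega>)) \<partial>M) \<le> 2 * exp (nu * s\<^sup>2 / 2)"
proof -
  have i: "integrable M (\<lambda>\<omega>. exp (s * X \<omega>))" "integrable M (\<lambda>\<omega>. exp ((- s) * X \<omega>))"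
    and e: "(\<integral>\<omega>. exp (s * X \<omega>) \<partial>M) \<le> exp (nu * s\<^sup>2 / 2)"
      "(\<integral>\<omega>. exp ((- s) * X \<omega>) \<partial>M) \<le> exp (nu * (- s)\<^sup>2 / 2)"
    using assms unfolding subgaussian_def by blast+
  then show "integrable M (\<lambda>\<omega>. exp (s * X \<omega>) + exp (- (s * X \<omega>)))"
    by simp
  show "(\<integral>\<omega>. exp (s * X \<omega>) + exp (- (s * X \<omega>)) \<partial>M) \<le> 2 * exp (nu * s\<^sup>2 / 2)"
    using i e by simp
qed

lemma subgaussian_abs_tail:
  assumes "prob_space M" and sg: "subgaussian M X nu" and nu: "nu > 0" and x: "x > 0"
  shows "measure M {\<omega> \<in> space M. x < \<bar>X \<omega>\<bar>} \<le> 2 * exp (- (x\<^sup>2) / (2 * nu))"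
proof -
  interpret prob_space M by fact
  define s where "s = x / nu"
  define g where "g \<omega> = exp (s * X \<omega>) + exp (- (s * X \<omega>))" for \<omega>
  have s: "s > 0"
    using nu x by (simp add: s_def)
  have [measurable]: "X \<in> borel_measurable M"
    using sg by (simp add: subgaussian_def)
  have "{\<omega> \<in> space M. x < \<bar>X \<omega>\<bar>} \<subseteq> {\<omega> \<in> space M. exp (s * x) \<le> g \<omega>}"
  proof safe
    fix \<omega> assume "x < \<bar>X \<omega>\<bar>"
    then have "exp (s * x) \<le> exp \<bar>s * X \<omega>\<bar>"
      using s by (simp add: abs_mult)
    also have "\<dots> \<le> g \<omega>"
      unfolding g_def by (rule exp_abs_le_exp_plus_exp_uminus)
    finally show "exp (s * x) \<le> g \<omega>" .
  qed
  then have "measure M {\<omega> \<in> space M. x < \<bar>X \<omega>\<bar>} \<le> measure M {\<omega> \<in> space M. exp (s * x) \<le> g \<omega>}"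
    by (rule finite_measure_mono) (simp add: g_def)
  also have "\<dots> \<le> (\<integral>\<omega>. g \<omega> \<partial>M) / exp (s * x)"
    using subgaussian_two_sided_exp(1)[OF sg]
    by (intro integral_Markov_inequality_measure[of _ _ "space M"]) (auto simp: g_def)
  also have "\<dots> \<le> 2 * exp (nu * s\<^sup>2 / 2) / exp (s * x)"
    using subgaussian_two_sided_exp(2)[OF sg] by (intro divide_right_mono) (auto simp: g_def)
  also have "\<dots> = 2 * exp (nu * s\<^sup>2 / 2 - s * x)"
    by (simp add: exp_diff)
  also have "nu * s\<^sup>2 / 2 - s * x = - (x\<^sup>2) / (2 * nu)"
    using nu by (simp add: s_def power2_eq_square field_simps)
  finally show ?thesis .
qed

lemma power_even_le_fact_mult_exp:
  fixes y :: real
  shows "y ^ (2 * p) \<le> fact (2 * p) * (exp y + exp (- y))"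
proof -
  have sums: "(\<lambda>k. \<bar>y\<bar> ^ k / fact k) sums exp \<bar>y\<bar>"
    using exp_converges[of "\<bar>y\<bar>"] by (simp add: divide_inverse mult.commute)
  have "\<bar>y\<bar> ^ (2 * p) / fact (2 * p) \<le> (\<Sum>k<Suc (2 * p). \<bar>y\<bar> ^ k / fact k)"
    by (simp add: sum_nonneg)
  also have "\<dots> \<le> exp \<bar>y\<bar>"
    using sum_le_suminf[OF sums_summable[OF sums], of "{..<Suc (2 * p)}"] sums_unique[OF sums]
    by simp
  also have "\<dots> \<le> exp y + exp (- y)"
    by (rule exp_abs_le_exp_plus_exp_uminus)
  finally have "\<bar>y\<bar> ^ (2 * p) \<le> fact (2 * p) * (exp y + exp (- y))"
    by (simp add: divide_le_eq mult.commute)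
  moreover have "\<bar>y\<bar> ^ (2 * p) = y ^ (2 * p)"
    by (simp add: power_mult)
  ultimately show ?thesis
    by simp
qed

lemma mean_power_le_mean_of_powers:
  fixes y :: "nat \<Rightarrow> real"
  assumes "T > 0" and "\<And>t. t < T \<Longrightarrow> y t \<ge> 0"
  shows "((\<Sum>t<T. y t) / real T) ^ p \<le> (\<Sum>t<T. y t ^ p) / real T"
proof -
  have "convex_on {0..} (\<lambda>x::real. x ^ p)"
    by (cases "even p") (auto intro: convex_on_subset[OF convex_power_even] convex_power_odd)
  then have "(\<Sum>t<T. (1 / real T) *\<^sub>R y t) ^ p \<le> (\<Sum>t<T. (1 / real T) * y t ^ p)"
    using assms by (intro convex_on_sum[where S = "{..<T}" and a = "\<lambda>_. 1 / real T"]) auto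
  then show ?thesis
    by (simp add: sum_divide_distrib[symmetric] sum_distrib_left[symmetric])
qed


lemma mean_square_power_le_mean_exp:
  fixes y :: "nat \<Rightarrow> real"
  assumes T: "T > 0" and s: "s > 0"
  shows "((\<Sum>t<T. (y t)\<^sup>2) / real T) ^ p * s ^ (2 * p)
    \<le> fact (2 * p) * ((\<Sum>t<T. exp (s * y t) + exp (- (s * y t))) / real T)"
proof -
  have "((\<Sum>t<T. (y t)\<^sup>2) / real T) ^ p * s ^ (2 * p)
      \<le> (\<Sum>t<T. ((y t)\<^sup>2) ^ p) / real T * s ^ (2 * p)"
    using T s by (intro mult_right_mono mean_power_le_mean_of_powers) auto
  also have "\<dots> = (\<Sum>t<T. ((y t)\<^sup>2) ^ p * s ^ (2 * p)) / real T"
    by (simp add: sum_distrib_right)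
  also have "\<dots> = (\<Sum>t<T. (s * y t) ^ (2 * p)) / real T"
    by (simp add: power_mult_distrib power_mult[symmetric] mult.commute)
  also have "\<dots> \<le> (\<Sum>t<T. fact (2 * p) * (exp (s * y t) + exp (- (s * y t)))) / real T"
    by (intro divide_right_mono sum_mono power_even_le_fact_mult_exp) auto
  also have "\<dots> = fact (2 * p) * ((\<Sum>t<T. exp (s * y t) + exp (- (s * y t))) / real T)"
    by (simp only: sum_distrib_left times_divide_eq_right)
  finally show ?thesis .
qed

lemma fact_even_le:
  "fact (2 * p) \<le> (2 * real p) ^ p * (2 * real p) ^ p"
proof -
  have "fact (2 * p) \<le> real ((2 * p) ^ (2 * p))"
    by (rule fact_le_power)
  also have "\<dots> = (2 * real p) ^ p * (2 * real p) ^ p"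
    by (simp only: of_nat_power of_nat_mult of_nat_add mult_2 power_add)
  finally show ?thesis .
qed

lemma subgaussian_mean_square_tail_exp:
  assumes "prob_space M" and T: "T > 0"
    and sg: "\<And>t. t < T \<Longrightarrow> subgaussian M (\<lambda>\<omega>. N \<omega> t) nu"
    and s: "s > 0" and x: "x > 0"
  shows "measure M {\<omega> \<in> space M. x < (\<Sum>t<T. (N \<omega> t)\<^sup>2) / real T}
           \<le> 2 * exp (nu * s\<^sup>2 / 2) * fact (2 * p) / (x ^ p * s ^ (2 * p))"
proof -
  interpret prob_space M by fact
  define h where "h \<omega> t = exp (s * N \<omega> t) + exp (- (s * N \<omega> t))" for \<omega> t
  define g where "g \<omega> = (\<Sum>t<T. h \<omega> t) / real T" for \<omega>
  define c where "c = x ^ p * s ^ (2 * p) / fact (2 * p)"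
  have c: "c > 0"
    using x s by (simp add: c_def)
  have [measurable]: "\<And>t. t < T \<Longrightarrow> (\<lambda>\<omega>. N \<omega> t) \<in> borel_measurable M"
    using sg by (simp add: subgaussian_def)
  have h_int: "\<And>t. t < T \<Longrightarrow> integrable M (\<lambda>\<omega>. h \<omega> t)"
    unfolding h_def by (rule subgaussian_two_sided_exp(1)[OF sg])
  then have g_int: "integrable M g"
    unfolding g_def by (intro integrable_divide_zero integrable_sum) auto
  have "(\<integral>\<omega>. g \<omega> \<partial>M) = (\<Sum>t<T. (\<integral>\<omega>. h \<omega> t \<partial>M)) / real T"
    unfolding g_def
    using Bochner_Integration.integral_sum[where I = "{..<T}" and M = M and f = "\<lambda>t \<omega>. h \<omega> t"] h_int
    by simp
  also have "\<dots> \<le> (\<Sum>t<T. 2 * exp (nu * s\<^sup>2 / 2)) / real T"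
    unfolding h_def using subgaussian_two_sided_exp(2)[OF sg]
    by (intro divide_right_mono sum_mono) auto
  also have "\<dots> = 2 * exp (nu * s\<^sup>2 / 2)"
    using T by simp
  finally have g_bound: "(\<integral>\<omega>. g \<omega> \<partial>M) \<le> 2 * exp (nu * s\<^sup>2 / 2)" .
  have "{\<omega> \<in> space M. x < (\<Sum>t<T. (N \<omega> t)\<^sup>2) / real T} \<subseteq> {\<omega> \<in> space M. c \<le> g \<omega>}"
  proof safe
    fix \<omega> assume "x < (\<Sum>t<T. (N \<omega> t)\<^sup>2) / real T"
    then have "x ^ p * s ^ (2 * p) \<le> ((\<Sum>t<T. (N \<omega> t)\<^sup>2) / real T) ^ p * s ^ (2 * p)"
      using x s by (intro mult_right_mono power_mono) auto
    also have "\<dots> \<le> fact (2 * p) * g \<omega>"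
      unfolding g_def h_def by (rule mean_square_power_le_mean_exp[OF T s])
    finally show "c \<le> g \<omega>"
      by (simp add: c_def divide_le_eq mult.commute)
  qed
  then have "measure M {\<omega> \<in> space M. x < (\<Sum>t<T. (N \<omega> t)\<^sup>2) / real T}
      \<le> measure M {\<omega> \<in> space M. c \<le> g \<omega>}"
    by (rule finite_measure_mono) (simp add: g_def h_def)
  also have "\<dots> \<le> (\<integral>\<omega>. g \<omega> \<partial>M) / c"
  proof (rule integral_Markov_inequality_measure[OF g_int, of "space M"])
    show "AE \<omega> in M. 0 \<le> g \<omega>"
      by (simp add: g_def h_def sum_nonneg)
  qed (use c in auto)
  also have "\<dots> \<le> 2 * exp (nu * s\<^sup>2 / 2) / c"
    using g_bound c by (intro divide_right_mono) auto
  finally show ?thesis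
    by (simp add: c_def)
qed

lemma subgaussian_mean_square_tail:
  assumes "prob_space M" and "T > 0"
    and "\<And>t. t < T \<Longrightarrow> subgaussian M (\<lambda>\<omega>. N \<omega> t) nu"
    and nu: "nu > 0" and p: "p \<ge> 1" and x: "x > 0"
  shows "measure M {\<omega> \<in> space M. x < (\<Sum>t<T. (N \<omega> t)\<^sup>2) / real T}
           \<le> 2 * (2 * exp 1 * real p * nu / x) ^ p"
proof -
  (* s is chosen so that the exponential moments are exp (nu s\<^sup>2 / 2) = exp p. *)
  define s where "s = sqrt (2 * real p / nu)"
  have s: "s > 0" and s2: "s\<^sup>2 = 2 * real p / nu"
    using nu p by (auto simp: s_def)
  have "measure M {\<omega> \<in> space M. x < (\<Sum>t<T. (N \<omega> t)\<^sup>2) / real T}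
      \<le> 2 * exp (nu * s\<^sup>2 / 2) * fact (2 * p) / (x ^ p * s ^ (2 * p))"
    by (rule subgaussian_mean_square_tail_exp[OF assms(1-3) s x])
  also have "\<dots> = 2 * (exp 1 * nu / x) ^ p * (fact (2 * p) / (2 * real p) ^ p)"
  proof -
    have sp: "s ^ (2 * p) = (2 * real p / nu) ^ p"
      by (simp add: power_mult s2)
    have ep: "exp (nu * s\<^sup>2 / 2) = exp 1 ^ p"
      using exp_of_nat_mult[of p 1] nu by (simp add: s2)
    have "(2 * real p) ^ p > 0" "x ^ p > 0" "nu ^ p > 0" "(fact (2 * p) :: real) > 0"
      using x nu p by auto
    then show ?thesis
      unfolding sp ep by (simp add: power_mult_distrib[of "exp 1" nu] field_simps)
  qed
  also have "\<dots> \<le> 2 * (exp 1 * nu / x) ^ p * (2 * real p) ^ p"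
    using x nu p fact_even_le[of p] by (intro mult_left_mono) (auto simp: divide_le_eq)
  also have "\<dots> = 2 * (2 * exp 1 * real p * nu / x) ^ p"
  proof -
    have "2 * exp 1 * real p * nu / x = exp 1 * nu / x * (2 * real p)"
      by simp
    then show ?thesis
      by (simp only: power_mult_distrib)
  qed
  finally show ?thesis .
qed

lemma subgaussian_mean_square_tail_log:
  assumes "prob_space M" and "T > 0"
    and sg: "\<And>t. t < T \<Longrightarrow> subgaussian M (\<lambda>\<omega>. N \<omega> t) nu"
    and nu: "nu > 0" and L: "L \<ge> 1"
  shows "measure M {\<omega> \<in> space M. 4 * exp 3 * nu * L < (\<Sum>t<T. (N \<omega> t)\<^sup>2) / real T}
           \<le> 2 * exp (- (2 * L))"
proof -
  define p where "p = nat \<lceil>L\<rceil>"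
  have "real p = of_int \<lceil>L\<rceil>" "\<lceil>L\<rceil> \<ge> 1"
    using L by (simp_all add: p_def)
  moreover have "L \<le> of_int \<lceil>L\<rceil>" "of_int \<lceil>L\<rceil> \<le> L + 1"
    by (rule le_of_int_ceiling, rule of_int_ceiling_le_add_one)
  ultimately have p: "L \<le> real p" "real p \<le> 2 * L" "p \<ge> 1"
    using L by linarith+
  have "measure M {\<omega> \<in> space M. 4 * exp 3 * nu * L < (\<Sum>t<T. (N \<omega> t)\<^sup>2) / real T}
      \<le> 2 * (2 * exp 1 * real p * nu / (4 * exp 3 * nu * L)) ^ p"
    using assms p by (intro subgaussian_mean_square_tail) auto
  also have "exp 3 = exp 1 * exp (2 :: real)"
    by (simp add: exp_add[symmetric])
  also have "2 * exp 1 * real p * nu / (4 * (exp 1 * exp 2) * nu * L) = real p / (2 * L) * exp (- 2)"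
    using nu L by (simp add: exp_minus field_simps)
  also have "2 * (real p / (2 * L) * exp (- 2)) ^ p \<le> 2 * exp (- 2) ^ p"
    using p L by (intro mult_left_mono power_mono) (auto simp: mult_le_cancel_right1 divide_le_eq)
  also have "exp (- 2) ^ p = exp (- (2 * real p))"
    by (simp add: exp_of_nat_mult[symmetric] mult.commute)
  also have "\<dots> \<le> exp (- (2 * L))"
    using p by simp
  finally show ?thesis
    by (simp add: exp_add[symmetric])
qed

section \<open>The condition number of a correlation matrix\<close>

definition trace_mat :: "'a::comm_ring_1 mat \<Rightarrow> 'a" where
  "trace_mat A = (\<Sum>i<dim_row A. A $$ (i, i))"

lemma trace_mat_mult_comm:
  assumes "A \<in> carrier_mat n n" and "B \<in> carrier_mat n n"
  shows "trace_mat (A * B) = trace_mat (B * A)"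
proof -
  have "trace_mat (A * B) = (\<Sum>i<n. \<Sum>k<n. A $$ (i, k) * B $$ (k, i))"
    unfolding trace_mat_def using assms by (simp add: scalar_prod_def atLeast0LessThan)
  also have "\<dots> = (\<Sum>k<n. \<Sum>i<n. B $$ (k, i) * A $$ (i, k))"
    by (subst sum.swap) (simp add: mult.commute)
  also have "\<dots> = trace_mat (B * A)"
    unfolding trace_mat_def using assms by (simp add: scalar_prod_def atLeast0LessThan)
  finally show ?thesis .
qed

lemma trace_mat_similar:
  assumes "similar_mat_wit A B P Q"
  shows "trace_mat A = trace_mat B"
proof -
  define n where "n = dim_row A"
  have "{A, B, P, Q} \<subseteq> carrier_mat n n" and QP: "Q * P = 1\<^sub>m n" and A: "A = P * B * Q"
    using assms unfolding similar_mat_wit_def n_def Let_def by blast+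
  then have carrier: "B \<in> carrier_mat n n" "P \<in> carrier_mat n n" "Q \<in> carrier_mat n n"
    by blast+
  have "trace_mat A = trace_mat ((P * B) * Q)"
    using A by simp
  also have "\<dots> = trace_mat (Q * (P * B))"
    using carrier by (intro trace_mat_mult_comm[of _ n]) auto
  also have "Q * (P * B) = B"
    using carrier QP by (simp add: assoc_mult_mat[symmetric])
  finally show ?thesis .
qed

lemma nonzero_trace_imp_nonzero_eigenvalue:
  fixes A :: "complex mat"
  assumes A: "A \<in> carrier_mat n n" and tr: "trace_mat A \<noteq> 0"
  shows "\<exists>a. eigenvalue A a \<and> a \<noteq> 0"
proof -
  obtain es where cp: "char_poly A = (\<Prod>e\<leftarrow>es. [:- e, 1:])"
    using char_poly_factorized[OF A] by blast
  obtain B P Q where "schur_decomposition A es = (B, P, Q)"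
    by (metis prod_cases3)
  from schur_decomposition[OF A cp this]
  have sim: "similar_mat_wit A B P Q" and diag: "diag_mat B = es"
    by auto
  have B: "B \<in> carrier_mat n n"
    using sim A unfolding similar_mat_wit_def Let_def by auto
  have "trace_mat B \<noteq> 0"
    using tr trace_mat_similar[OF sim] by simp
  then have "(\<Sum>i<n. B $$ (i, i)) \<noteq> 0"
    using B by (simp add: trace_mat_def)
  then obtain i where i: "i < n" "B $$ (i, i) \<noteq> 0"
    using sum.not_neutral_contains_not_neutral by blast
  then have "B $$ (i, i) \<in> set es"
    using B unfolding diag[symmetric] diag_mat_def by auto
  then have "poly (char_poly A) (B $$ (i, i)) = 0"
    unfolding cp poly_prod_list by auto
  then show ?thesis
    using i(2) eigenvalue_root_char_poly[OF A] by blast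
qed

lemma real_symmetric_quadratic_form_real:
  fixes A :: "real mat" and v :: "complex vec"
  assumes sym: "\<And>i j. i < n \<Longrightarrow> j < n \<Longrightarrow> A $$ (i, j) = A $$ (j, i)"
  shows "Im (\<Sum>i<n. \<Sum>j<n. cnj (v $ i) * of_real (A $$ (i, j)) * v $ j) = 0"
proof -
  define w where "w = (\<Sum>i<n. \<Sum>j<n. cnj (v $ i) * of_real (A $$ (i, j)) * v $ j)"
  have "cnj w = (\<Sum>i<n. \<Sum>j<n. v $ i * of_real (A $$ (i, j)) * cnj (v $ j))"
    unfolding w_def by simp
  also have "\<dots> = (\<Sum>j<n. \<Sum>i<n. v $ i * of_real (A $$ (i, j)) * cnj (v $ j))"
    by (rule sum.swap)
  also have "\<dots> = w"
    unfolding w_def by (intro sum.cong refl) (auto simp: sym mult_ac)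
  finally have "Im (cnj w) = Im w"
    by simp
  then show ?thesis
    unfolding w_def[symmetric] by simp
qed

lemma eigenvalue_real_symmetric_real:
  fixes A :: "real mat"
  assumes A: "A \<in> carrier_mat n n"
    and sym: "\<And>i j. i < n \<Longrightarrow> j < n \<Longrightarrow> A $$ (i, j) = A $$ (j, i)"
    and ev: "eigenvalue (map_mat complex_of_real A) a"
  shows "Im a = 0"
proof -
  obtain v where v: "v \<in> carrier_vec n" "v \<noteq> 0\<^sub>v n" "map_mat complex_of_real A *\<^sub>v v = a \<cdot>\<^sub>v v"
    using ev A unfolding eigenvalue_def eigenvector_def by auto
  have Av: "(\<Sum>j<n. of_real (A $$ (i, j)) * v $ j) = a * v $ i" if "i < n" for i
  proof -
    have "(map_mat complex_of_real A *\<^sub>v v) $ i = (\<Sum>j<n. of_real (A $$ (i, j)) * v $ j)"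
      using that A v(1) by (simp add: scalar_prod_def atLeast0LessThan)
    then show ?thesis
      using v(3) that v(1) by simp
  qed
  define S where "S = (\<Sum>i<n. (cmod (v $ i))\<^sup>2)"
  have "(\<Sum>i<n. \<Sum>j<n. cnj (v $ i) * of_real (A $$ (i, j)) * v $ j)
      = (\<Sum>i<n. cnj (v $ i) * (\<Sum>j<n. of_real (A $$ (i, j)) * v $ j))"
    by (simp add: sum_distrib_left mult.assoc)
  also have "\<dots> = (\<Sum>i<n. cnj (v $ i) * (a * v $ i))"
    by (simp add: Av)
  also have "\<dots> = a * of_real S"
    unfolding S_def of_real_sum complex_norm_square
    by (simp add: sum_distrib_left mult_ac)
  finally have quad: "(\<Sum>i<n. \<Sum>j<n. cnj (v $ i) * of_real (A $$ (i, j)) * v $ j) = a * of_real S" .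
  have "Im (a * of_real S) = 0"
    using real_symmetric_quadratic_form_real[where n = n and A = A and v = v, OF sym]
    unfolding quad .
  then have form: "Im a * S = 0"
    by simp
  obtain i where "i < n" "v $ i \<noteq> 0"
    using v(1,2) by (auto simp: vec_eq_iff)
  then have "0 < (cmod (v $ i))\<^sup>2" "(cmod (v $ i))\<^sup>2 \<le> S"
    unfolding S_def by (auto intro: member_le_sum)
  then have "S > 0"
    by linarith
  with form show ?thesis
    by simp
qed

lemma symmetric_nonzero_trace_imp_nonzero_eigenvalue:
  fixes A :: "real mat"
  assumes A: "A \<in> carrier_mat n n"
    and sym: "\<And>i j. i < n \<Longrightarrow> j < n \<Longrightarrow> A $$ (i, j) = A $$ (j, i)"
    and tr: "trace_mat A \<noteq> 0"
  shows "\<exists>r. eigenvalue A r \<and> r \<noteq> 0"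
proof -
  let ?A = "map_mat complex_of_real A"
  have "trace_mat ?A = of_real (trace_mat A)"
    using A by (simp add: trace_mat_def)
  then obtain a where a: "eigenvalue ?A a" "a \<noteq> 0"
    using nonzero_trace_imp_nonzero_eigenvalue[of ?A n] A tr by auto
  have a_real: "a = of_real (Re a)"
    using eigenvalue_real_symmetric_real[OF A sym a(1)] by (simp add: complex_eq_iff)
  have "of_real (poly (char_poly A) (Re a)) = poly (char_poly ?A) a"
    by (subst a_real) (simp add: of_real_hom.char_poly_hom[OF A])
  also have "\<dots> = 0"
    using a(1) eigenvalue_root_char_poly[of ?A n] A by simp
  finally have "eigenvalue A (Re a)"
    using eigenvalue_root_char_poly[OF A] by simp
  moreover have "Re a \<noteq> 0"
    using a(2) a_real by auto
  ultimately show ?thesis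
    by blast
qed

lemma finite_eigenvalues:
  fixes A :: "'a::field mat"
  assumes A: "A \<in> carrier_mat n n"
  shows "finite {k. eigenvalue A k}"
proof -
  have "char_poly A \<noteq> 0"
    using degree_monic_char_poly[OF A] by auto
  then show ?thesis
    using poly_roots_finite eigenvalue_root_char_poly[OF A] by simp
qed

lemma cond_number_ge_1:
  fixes A :: "real mat"
  assumes A: "A \<in> carrier_mat n n"
    and ev: "\<exists>k. eigenvalue A k \<and> k \<noteq> 0" and pos: "lam_min_nz A > 0"
  shows "1 \<le> cond_number A"
proof -
  have "finite {k. eigenvalue A k \<and> k \<noteq> 0}"
    using finite_eigenvalues[OF A] by (rule finite_subset[rotated]) auto
  then have "lam_min_nz A \<in> {k. eigenvalue A k}"
    using ev Min_in unfolding lam_min_nz_def by fastforce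
  then have "lam_min_nz A \<le> lam_max A"
    unfolding lam_max_def using finite_eigenvalues[OF A] by (intro Max_ge) auto
  then show ?thesis
    using pos by (simp add: cond_number_def)
qed

lemma corr_mat_entry:
  assumes "T > 0" and "i < n" and "j < n"
  shows "corr_mat n T Z $$ (i, j) = (\<Sum>t<T. centered T (Z i) t * centered T (Z j) t)
    / (real T * sqrt (sig_power T (Z i)) * sqrt (sig_power T (Z j)))"
  using assms by (simp add: corr_mat_def sum_centering_bilinear)

lemma cond_number_corr_mat_ge_1:
  assumes n: "n > 0" and T: "T > 0" and sig: "\<And>i. i < n \<Longrightarrow> sig_power T (Z i) > 0"
    and pos: "lam_min_nz (corr_mat n T Z) > 0"
  shows "1 \<le> cond_number (corr_mat n T Z)"
proof (rule cond_number_ge_1)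
  show carrier: "corr_mat n T Z \<in> carrier_mat n n"
    by (simp add: corr_mat_def)
  have diag: "corr_mat n T Z $$ (i, i) = 1" if "i < n" for i
  proof -
    have "(\<Sum>t<T. centered T (Z i) t * centered T (Z i) t) = real T * sig_power T (Z i)"
      using T by (simp add: sig_power_def power2_eq_square)
    moreover have "sqrt (sig_power T (Z i)) * sqrt (sig_power T (Z i)) = sig_power T (Z i)"
      using sig[OF that] by simp
    ultimately show ?thesis
      using sig[OF that] T that by (simp add: corr_mat_entry mult.assoc)
  qed
  have "corr_mat n T Z $$ (i, j) = corr_mat n T Z $$ (j, i)" if "i < n" "j < n" for i j
  proof -
    have "(\<Sum>t<T. centered T (Z i) t * centered T (Z j) t)
        = (\<Sum>t<T. centered T (Z j) t * centered T (Z i) t)"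
      by (simp add: mult.commute)
    then show ?thesis
      unfolding corr_mat_entry[OF T that] corr_mat_entry[OF T that(2,1)] by (simp add: mult_ac)
  qed
  moreover have "trace_mat (corr_mat n T Z) = real n"
    using carrier diag by (simp add: trace_mat_def)
  ultimately show "\<exists>k. eigenvalue (corr_mat n T Z) k \<and> k \<noteq> 0"
    using n by (intro symmetric_nonzero_trace_imp_nonzero_eigenvalue[OF carrier]) auto
qed (rule pos)

section \<open>Concentration of the noisy signal powers\<close>

lemma sig_power_ratio_perturbation:
  assumes T: "T > 0" and s: "sig_power T z > 0" and nu: "nu > 0"
    and g: "0 < g" "g \<le> sig_power T z / nu" and L: "L \<ge> 0" and K: "K \<ge> 4"
    and cross: "\<bar>\<Sum>t<T. centered T z t / sqrt (real T * sig_power T z) * y t\<bar> \<le> sqrt (4 * nu * L)"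
    and square: "(\<Sum>t<T. (y t)\<^sup>2) / real T \<le> K * nu * L"
  shows "\<bar>sig_power T (\<lambda>t. z t + y t) / sig_power T z - 1\<bar> \<le> K * (L / g + sqrt (L / (real T * g)))"
proof -
  define s where "s = sig_power T z"
  define D where "D = sqrt (real T * s)"
  define a where "a = 2 * (\<Sum>t<T. centered T z t * y t) / (real T * s)"
  define b where "b = (\<Sum>t<T. (centered T y t)\<^sup>2) / (real T * s)"
  have s0: "s > 0" and D0: "D > 0" and DD: "D * D = real T * s"
    using s T by (simp_all add: s_def D_def)
  have nu_s: "nu / s \<le> 1 / g"
    using g s0 nu by (simp add: s_def field_simps)
  have "sig_power T (\<lambda>t. z t + y t)
      = s + 2 / real T * (\<Sum>t<T. centered T z t * y t) + 1 / real T * (\<Sum>t<T. (centered T y t)\<^sup>2)"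
    unfolding s_def by (rule sig_power_add[OF T])
  then have "sig_power T (\<lambda>t. z t + y t) / s - 1 = a + b"
    using T s0 by (simp add: a_def b_def field_simps)
  moreover have "\<bar>a\<bar> \<le> 4 * sqrt (L / (real T * g))"
  proof -
    have "(\<Sum>t<T. centered T z t * y t) = D * (\<Sum>t<T. centered T z t / D * y t)"
      using D0 by (simp add: sum_distrib_left)
    then have "\<bar>a\<bar> = 2 * \<bar>\<Sum>t<T. centered T z t / D * y t\<bar> / D"
      using D0 unfolding a_def DD[symmetric] by (simp add: abs_mult)
    also have "\<dots> \<le> 2 * sqrt (4 * nu * L) / D"
      using cross D0 by (intro divide_right_mono) (auto simp: D_def s_def)
    also have "\<dots> = 2 * sqrt (4 * (nu / s) * (L / real T))"
    proof -
      have "4 * (nu / s) * (L / real T) = 4 * nu * L / (real T * s)"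
        by simp
      then show ?thesis
        by (simp only: D_def real_sqrt_divide times_divide_eq_right)
    qed
    also have "\<dots> \<le> 2 * sqrt (4 * (1 / g) * (L / real T))"
      using nu_s L by (intro mult_left_mono real_sqrt_le_mono mult_right_mono) auto
    also have "\<dots> = 4 * sqrt (L / (real T * g))"
    proof -
      have "4 * (1 / g) * (L / real T) = 2\<^sup>2 * (L / (real T * g))"
        by simp
      then show ?thesis
        by (simp only: real_sqrt_mult real_sqrt_abs)
    qed
    finally show ?thesis .
  qed
  moreover have "0 \<le> b" and "b \<le> K * (L / g)"
  proof -
    show "0 \<le> b"
      using s0 T by (simp add: b_def sum_nonneg)
    have "b \<le> (\<Sum>t<T. (y t)\<^sup>2) / real T / s"
      using sum_centered_sq_le[OF T, of y] s0 T by (simp add: b_def divide_right_mono)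
    also have "\<dots> \<le> K * nu * L / s"
      using square s0 by (intro divide_right_mono) auto
    also have "\<dots> = K * L * (nu / s)"
      by simp
    also have "\<dots> \<le> K * L * (1 / g)"
      using nu_s K L by (intro mult_left_mono) auto
    finally show "b \<le> K * (L / g)"
      by simp
  qed
  moreover have "4 * sqrt (L / (real T * g)) \<le> K * sqrt (L / (real T * g))"
    using K L g T by (intro mult_right_mono) auto
  ultimately show ?thesis
    unfolding s_def by (simp add: distrib_left)
qed

lemma sqrt_ratio_deviation_le:
  fixes s1 s2 h1 h2 d :: real
  assumes s1: "s1 > 0" and s2: "s2 > 0" and d: "d \<le> 1 / 2"
    and dev1: "\<bar>h1 / s1 - 1\<bar> \<le> d" and dev2: "\<bar>h2 / s2 - 1\<bar> \<le> d"
  shows "\<bar>sqrt s1 * sqrt s2 / (sqrt h1 * sqrt h2) - 1\<bar> \<le> 2 * d"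
proof -
  define a where "a = h1 / s1"
  define b where "b = h2 / s2"
  define q where "q = sqrt (a * b)"
  have d0: "d \<ge> 0"
    using dev1 by linarith
  have a: "1 - d \<le> a" "a \<le> 1 + d" and b: "1 - d \<le> b" "b \<le> 1 + d"
    using dev1 dev2 by (auto simp: a_def b_def)
  have "(1 - d)\<^sup>2 \<le> a * b"
    unfolding power2_eq_square by (rule mult_mono) (use a b d in auto)
  then have q_lower: "1 - d \<le> q"
    unfolding q_def by (rule real_le_rsqrt)
  have "a * b \<le> (1 + d)\<^sup>2"
    unfolding power2_eq_square by (rule mult_mono) (use a b d d0 in auto)
  then have q_upper: "q \<le> 1 + d"
    unfolding q_def using d0 by (intro real_le_lsqrt) auto
  have q0: "q > 0"
    using q_lower d by linarith
  have "sqrt h1 * sqrt h2 = q * (sqrt s1 * sqrt s2)"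
    using s1 s2 unfolding q_def a_def b_def by (simp add: real_sqrt_mult real_sqrt_divide)
  then have ratio: "sqrt s1 * sqrt s2 / (sqrt h1 * sqrt h2) = 1 / q"
    using s1 s2 q0 by simp
  have "1 / q \<le> 1 / (1 - d)"
    using q_lower d by (intro divide_left_mono) auto
  also have "\<dots> \<le> 1 + 2 * d"
    using d d0 mult_nonneg_nonneg[of d "1 - 2 * d"] by (simp add: divide_le_eq algebra_simps)
  finally have "1 / q \<le> 1 + 2 * d" .
  moreover have "1 - 2 * d \<le> 1 / (1 + d)"
    using d0 mult_nonneg_nonneg[of d "1 + 2 * d"] by (simp add: le_divide_eq algebra_simps)
  moreover have "1 / (1 + d) \<le> 1 / q"
    using q_upper q0 by (intro divide_left_mono) auto
  ultimately show ?thesis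
    unfolding ratio by simp
qed

lemma sig_power_measurable:
  assumes "\<And>t. t < T \<Longrightarrow> (\<lambda>\<omega>. N \<omega> t) \<in> borel_measurable M"
  shows "(\<lambda>\<omega>. sig_power T (\<lambda>t. z t + N \<omega> t)) \<in> borel_measurable M"
  unfolding sig_power_def centered_def using assms
  by (intro borel_measurable_times borel_measurable_sum borel_measurable_power
      borel_measurable_add) auto

lemma sig_power_ratio_tail:
  assumes P: "prob_space M" and T: "T > 0" and s: "sig_power T z > 0" and nu: "nu > 0"
    and g: "0 < g" "g \<le> sig_power T z / nu" and L: "L \<ge> 1"
    and sg: "subgaussian_vec M T N nu"
  shows "measure M {\<omega> \<in> space M. 4 * exp 3 * (L / g + sqrt (L / (real T * g)))
           < \<bar>sig_power T (\<lambda>t. z t + N \<omega> t) / sig_power T z - 1\<bar>} \<le> 4 * exp (- (2 * L))"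
proof -
  interpret prob_space M by fact
  define u where "u t = centered T z t / sqrt (real T * sig_power T z)" for t
  define cross where "cross = {\<omega> \<in> space M. sqrt (4 * nu * L) < \<bar>\<Sum>t<T. u t * N \<omega> t\<bar>}"
  define square where
    "square = {\<omega> \<in> space M. 4 * exp 3 * nu * L < (\<Sum>t<T. (N \<omega> t)\<^sup>2) / real T}"
  have "(\<Sum>t<T. (centered T z t)\<^sup>2) = real T * sig_power T z"
    using T by (simp add: sig_power_def)
  then have "(\<Sum>t<T. (u t)\<^sup>2) = 1"
    using T s by (simp add: u_def power_divide sum_divide_distrib[symmetric])
  then have sg_cross: "subgaussian M (\<lambda>\<omega>. \<Sum>t<T. u t * N \<omega> t) nu"
    using sg unfolding subgaussian_vec_def by blast
  have sg_coord: "\<And>t. t < T \<Longrightarrow> subgaussian M (\<lambda>\<omega>. N \<omega> t) nu"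
    using sg by (rule subgaussian_vec_coordinate)
  then have [measurable]: "\<And>t. t < T \<Longrightarrow> (\<lambda>\<omega>. N \<omega> t) \<in> borel_measurable M"
    by (simp add: subgaussian_def)
  have [measurable]: "(\<lambda>\<omega>. \<Sum>t<T. u t * N \<omega> t) \<in> borel_measurable M"
    using sg_cross by (simp add: subgaussian_def)
  have sets: "cross \<in> sets M" "square \<in> sets M"
    unfolding cross_def square_def by measurable
  have "measure M cross \<le> 2 * exp (- ((sqrt (4 * nu * L))\<^sup>2) / (2 * nu))"
    unfolding cross_def using nu L by (intro subgaussian_abs_tail[OF P sg_cross]) auto
  also have "\<dots> = 2 * exp (- (2 * L))"
    using nu L by simp
  finally have cross_prob: "measure M cross \<le> 2 * exp (- (2 * L))" .
  have square_prob: "measure M square \<le> 2 * exp (- (2 * L))"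
    unfolding square_def by (rule subgaussian_mean_square_tail_log[OF P T sg_coord nu L])
  have close: "\<bar>sig_power T (\<lambda>t. z t + N \<omega> t) / sig_power T z - 1\<bar>
      \<le> 4 * exp 3 * (L / g + sqrt (L / (real T * g)))"
    if "\<omega> \<in> space M" "\<omega> \<notin> cross" "\<omega> \<notin> square" for \<omega>
    using that L exp_ge_add_one_self[of 3]
    by (intro sig_power_ratio_perturbation[OF T s nu g])
       (auto simp: cross_def square_def u_def mult.assoc)
  have "{\<omega> \<in> space M. 4 * exp 3 * (L / g + sqrt (L / (real T * g)))
      < \<bar>sig_power T (\<lambda>t. z t + N \<omega> t) / sig_power T z - 1\<bar>} \<subseteq> cross \<union> square"
    using close by fastforce
  then have "measure M {\<omega> \<in> space M. 4 * exp 3 * (L / g + sqrt (L / (real T * g)))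
      < \<bar>sig_power T (\<lambda>t. z t + N \<omega> t) / sig_power T z - 1\<bar>} \<le> measure M (cross \<union> square)"
    using sets by (intro finite_measure_mono) auto
  also have "\<dots> \<le> measure M cross + measure M square"
    using sets by (intro measure_Un_le) auto
  finally show ?thesis
    using cross_prob square_prob by simp
qed

lemma snr_gamma_pos:
  assumes "n > 0" and "\<And>i. i < n \<Longrightarrow> sig_power T (Z i) > 0" and "\<And>i. i < n \<Longrightarrow> nu i > 0"
  shows "snr_gamma n T Z nu > 0"
  unfolding snr_gamma_def using assms by (subst Min_gr_iff) auto

lemma snr_gamma_le:
  assumes "i < n"
  shows "snr_gamma n T Z nu \<le> sig_power T (Z i) / nu i"
  using assms by (simp add: snr_gamma_def)

lemma ratio_deviation_prob_le:
  assumes P: "prob_space M" and T: "T > 0" and n: "n \<ge> 3"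
    and sig: "\<And>i. i < n \<Longrightarrow> sig_power T (Z i) > 0"
    and nu: "\<And>i. i < n \<Longrightarrow> nu i > 0"
    and sg: "\<And>i. i < n \<Longrightarrow> subgaussian_vec M T (\<lambda>\<omega>. N \<omega> i) (nu i)"
    and small: "4 * exp 3 * (ln (real n) / snr_gamma n T Z nu
                 + sqrt (ln (real n) / (real T * snr_gamma n T Z nu))) \<le> 1 / 2"
  shows "measure M {\<omega> \<in> space M. \<exists>i<n. \<exists>j<n.
                \<bar>sqrt (sig_power T (Z i)) * sqrt (sig_power T (Z j))
                  / (sqrt (sig_power T (\<lambda>t. Z i t + N \<omega> i t))
                     * sqrt (sig_power T (\<lambda>t. Z j t + N \<omega> j t))) - 1\<bar>
                > 8 * exp 3 * (ln (real n) / snr_gamma n T Z nu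
                       + sqrt (ln (real n) / (real T * snr_gamma n T Z nu)))} \<le> 4 / real n"
  (is "measure M ?bad \<le> _")
proof -
  interpret prob_space M by fact
  define r where "r = ln (real n) / snr_gamma n T Z nu + sqrt (ln (real n) / (real T * snr_gamma n T Z nu))"
  define row where "row i = {\<omega> \<in> space M.
      4 * exp 3 * r < \<bar>sig_power T (\<lambda>t. Z i t + N \<omega> i t) / sig_power T (Z i) - 1\<bar>}" for i
  have row_sets: "row i \<in> sets M" if "i < n" for i
  proof -
    have "\<And>t. t < T \<Longrightarrow> (\<lambda>\<omega>. N \<omega> i t) \<in> borel_measurable M"
      using subgaussian_vec_coordinate[OF sg[OF that]] by (simp add: subgaussian_def)
    then have [measurable]: "(\<lambda>\<omega>. sig_power T (\<lambda>t. Z i t + N \<omega> i t)) \<in> borel_measurable M"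
      by (rule sig_power_measurable)
    show ?thesis
      unfolding row_def by measurable
  qed
  have row_prob: "measure M (row i) \<le> 4 / (real n)\<^sup>2" if "i < n" for i
  proof -
    have L: "ln (real n) \<ge> 1"
      using n exp_le by (simp add: ln_ge_iff)
    have snr: "snr_gamma n T Z nu > 0"
      using n sig nu by (intro snr_gamma_pos) auto
    have "exp (2 * ln (real n)) = (real n)\<^sup>2"
      using exp_of_nat_mult[of 2 "ln (real n)"] n by simp
    then show ?thesis
      using sig_power_ratio_tail[OF P T sig[OF that] nu[OF that] snr snr_gamma_le[OF that] L sg[OF that]]
      unfolding row_def r_def by (simp add: exp_minus inverse_eq_divide)
  qed
  have half: "4 * exp 3 * r \<le> 1 / 2"
    using small by (simp add: r_def)
  have "?bad \<subseteq> (\<Union>i<n. row i)"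
  proof (rule subsetI, rule ccontr)
    fix \<omega> assume "\<omega> \<in> ?bad" and "\<omega> \<notin> (\<Union>i<n. row i)"
    then obtain i j where ij: "i < n" "j < n"
      and far: "8 * exp 3 * r < \<bar>sqrt (sig_power T (Z i)) * sqrt (sig_power T (Z j))
          / (sqrt (sig_power T (\<lambda>t. Z i t + N \<omega> i t)) * sqrt (sig_power T (\<lambda>t. Z j t + N \<omega> j t))) - 1\<bar>"
      and near: "\<And>k. k < n \<Longrightarrow>
          \<bar>sig_power T (\<lambda>t. Z k t + N \<omega> k t) / sig_power T (Z k) - 1\<bar> \<le> 4 * exp 3 * r"
      by (auto simp: row_def r_def not_less)
    have "\<bar>sqrt (sig_power T (Z i)) * sqrt (sig_power T (Z j))
          / (sqrt (sig_power T (\<lambda>t. Z i t + N \<omega> i t)) * sqrt (sig_power T (\<lambda>t. Z j t + N \<omega> j t))) - 1\<bar>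
        \<le> 2 * (4 * exp 3 * r)"
      by (rule sqrt_ratio_deviation_le[OF sig[OF ij(1)] sig[OF ij(2)] half near[OF ij(1)] near[OF ij(2)]])
    with far show False
      by simp
  qed
  then have "measure M ?bad \<le> measure M (\<Union>i<n. row i)"
    using row_sets by (intro finite_measure_mono) auto
  also have "\<dots> \<le> (\<Sum>i<n. measure M (row i))"
    using row_sets by (intro finite_measure_subadditive_finite) auto
  also have "\<dots> \<le> (\<Sum>i<n. 4 / (real n)\<^sup>2)"
    using row_prob by (intro sum_mono) auto
  also have "\<dots> = 4 / real n"
    by (simp add: power2_eq_square)
  finally show ?thesis .
qed

section \<open>Asymptotics\<close>

lemma ln_over_snr_tendsto_0:
  fixes n T :: "nat \<Rightarrow> nat" and kappa g :: "nat \<Rightarrow> real"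
  assumes T_inf: "filterlim T at_top sequentially"
    and n_O_T: "(\<lambda>k. real (n k)) \<in> O(\<lambda>k. real (T k))"
    and n_pos: "\<forall>\<^sub>F k in sequentially. n k > 0"
    and kappa: "\<forall>\<^sub>F k in sequentially. kappa k \<ge> 1"
    and g: "\<forall>\<^sub>F k in sequentially. g k > 0"
    and lim: "(\<lambda>k. kappa k * ln (real (T k)) / g k) \<longlonglongrightarrow> 0"
  shows "(\<lambda>k. ln (real (n k)) / g k) \<longlonglongrightarrow> 0"
proof (rule Lim_null_comparison)
  obtain c where c: "c > 0" and n_le: "\<forall>\<^sub>F k in sequentially. norm (real (n k)) \<le> c * norm (real (T k))"
    using n_O_T by (rule landau_o.bigE)
  have "filterlim (\<lambda>k. ln (real (T k))) at_top sequentially"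
    by (rule filterlim_compose[OF ln_at_top filterlim_compose[OF filterlim_real_sequentially T_inf]])
  then have ln_T: "\<forall>\<^sub>F k in sequentially. ln (real (T k)) \<ge> max \<bar>ln c\<bar> 1"
    unfolding filterlim_at_top by blast
  show "\<forall>\<^sub>F k in sequentially. norm (ln (real (n k)) / g k) \<le> 2 * (kappa k * ln (real (T k)) / g k)"
    using n_pos kappa g n_le ln_T
  proof eventually_elim
    case (elim k)
    then have T_pos: "real (T k) > 0"
      by (cases "T k = 0") auto
    have "ln (real (n k)) \<le> ln (c * real (T k))"
      using elim c T_pos by (subst ln_le_cancel_iff) auto
    also have "\<dots> = ln c + ln (real (T k))"
      using c T_pos by (simp add: ln_mult)
    also have "\<dots> \<le> 1 * (2 * ln (real (T k)))"
      using elim by linarith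
    also have "\<dots> \<le> kappa k * (2 * ln (real (T k)))"
      using elim by (intro mult_right_mono) auto
    finally have "ln (real (n k)) / g k \<le> 2 * (kappa k * ln (real (T k))) / g k"
      using elim by (intro divide_right_mono) (auto simp: mult_ac)
    then show ?case
      using elim by simp
  qed
  show "(\<lambda>k. 2 * (kappa k * ln (real (T k)) / g k)) \<longlonglongrightarrow> 0"
    by (rule tendsto_mult_right_zero[OF lim])
qed

lemma rate_tendsto_0:
  fixes T :: "nat \<Rightarrow> nat" and L g :: "nat \<Rightarrow> real"
  assumes lim: "(\<lambda>k. L k / g k) \<longlonglongrightarrow> 0"
    and nonneg: "\<forall>\<^sub>F k in sequentially. L k / g k \<ge> 0"
    and T: "\<forall>\<^sub>F k in sequentially. T k \<ge> 1"
  shows "(\<lambda>k. L k / g k + sqrt (L k / (real (T k) * g k))) \<longlonglongrightarrow> 0"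
proof -
  have "(\<lambda>k. sqrt (L k / (real (T k) * g k))) \<longlonglongrightarrow> 0"
  proof (rule Lim_null_comparison)
    show "\<forall>\<^sub>F k in sequentially. norm (sqrt (L k / (real (T k) * g k))) \<le> sqrt (L k / g k)"
      using nonneg T
    proof eventually_elim
      case (elim k)
      define a where "a = L k / g k"
      have "0 \<le> a / real (T k)" and "a / real (T k) \<le> a"
        using elim unfolding a_def[symmetric] by (simp_all add: divide_le_eq mult_le_cancel_left1)
      moreover have "L k / (real (T k) * g k) = a / real (T k)"
        by (simp add: a_def)
      ultimately show ?case
        unfolding a_def[symmetric] by simp
    qed
    show "(\<lambda>k. sqrt (L k / g k)) \<longlonglongrightarrow> 0"
      using tendsto_real_sqrt[OF lim] by simp
  qed
  then show ?thesis
    using tendsto_add[OF lim] by simp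
qed

lemma snr_rate_tendsto_0:
  fixes n T :: "nat \<Rightarrow> nat" and Zs :: "nat \<Rightarrow> nat \<Rightarrow> nat \<Rightarrow> real" and nu :: "nat \<Rightarrow> nat \<Rightarrow> real"
  assumes n_inf: "filterlim n at_top sequentially"
    and T_inf: "filterlim T at_top sequentially"
    and sig_pos: "\<And>k i. i < n k \<Longrightarrow> sig_power (T k) (Zs k i) > 0"
    and nu_pos: "\<And>k i. i < n k \<Longrightarrow> nu k i > 0"
    and n_O_T: "(\<lambda>k. real (n k)) \<in> O(\<lambda>k. real (T k))"
    and lam_bdd: "\<exists>c>0. \<forall>\<^sub>F k in sequentially. lam_min_nz (corr_mat (n k) (T k) (Zs k)) \<ge> c"
    and kappa_gamma: "(\<lambda>k. cond_number (corr_mat (n k) (T k) (Zs k)) * ln (real (T k))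
                          / snr_gamma (n k) (T k) (Zs k) (nu k)) \<longlonglongrightarrow> 0"
  shows "(\<lambda>k. ln (real (n k)) / snr_gamma (n k) (T k) (Zs k) (nu k)
            + sqrt (ln (real (n k)) / (real (T k) * snr_gamma (n k) (T k) (Zs k) (nu k)))) \<longlonglongrightarrow> 0"
proof -
  define g where "g k = snr_gamma (n k) (T k) (Zs k) (nu k)" for k
  have n_pos: "\<forall>\<^sub>F k in sequentially. n k \<ge> 1" and T_pos: "\<forall>\<^sub>F k in sequentially. T k \<ge> 1"
    using n_inf T_inf by (simp_all add: filterlim_at_top)
  have g_pos: "\<forall>\<^sub>F k in sequentially. g k > 0"
    using n_pos by eventually_elim (auto simp: g_def intro: snr_gamma_pos sig_pos nu_pos)
  obtain c where c: "c > 0"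
    and lam: "\<forall>\<^sub>F k in sequentially. lam_min_nz (corr_mat (n k) (T k) (Zs k)) \<ge> c"
    using lam_bdd by blast
  have "\<forall>\<^sub>F k in sequentially. 1 \<le> cond_number (corr_mat (n k) (T k) (Zs k))"
    using lam n_pos T_pos
    by eventually_elim (use c sig_pos in \<open>auto intro: cond_number_corr_mat_ge_1\<close>)
  then have "(\<lambda>k. ln (real (n k)) / g k) \<longlonglongrightarrow> 0"
    using T_inf n_O_T eventually_mono[OF n_pos] g_pos kappa_gamma unfolding g_def
    by (intro ln_over_snr_tendsto_0) auto
  then show ?thesis
    unfolding g_def[symmetric] using T_pos eventually_mono[OF eventually_conj[OF n_pos g_pos]]
    by (intro rate_tendsto_0) auto
qed

lemma eventually_le_of_le_tendsto_0:
  fixes X f :: "'a \<Rightarrow> real"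
  assumes "\<forall>\<^sub>F k in F. X k \<le> f k" and "(f \<longlongrightarrow> 0) F" and "\<epsilon> > 0"
  shows "\<forall>\<^sub>F k in F. X k \<le> \<epsilon>"
  using assms(1) order_tendstoD(2)[OF assms(2,3)] by eventually_elim simp

theorem mainTheorem7:
  fixes n T :: "nat \<Rightarrow> nat"
    and Zs :: "nat \<Rightarrow> nat \<Rightarrow> nat \<Rightarrow> real"
    and \<Omega> :: "nat \<Rightarrow> 'a measure"
    and Nz :: "nat \<Rightarrow> 'a \<Rightarrow> nat \<Rightarrow> nat \<Rightarrow> real"
    and nu :: "nat \<Rightarrow> nat \<Rightarrow> real"
  assumes n_inf: "filterlim n at_top sequentially"
    and T_inf: "filterlim T at_top sequentially"
    and prob: "\<And>k. prob_space (\<Omega> k)"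
    and sig_pos: "\<And>k i. i < n k \<Longrightarrow> sig_power (T k) (Zs k i) > 0"
    and nu_pos: "\<And>k i. i < n k \<Longrightarrow> nu k i > 0"
    and indep: "\<And>k. prob_space.indep_vars (\<Omega> k)
                  (\<lambda>_. PiM {..<T k} (\<lambda>_. borel))
                  (\<lambda>i \<omega>. restrict (\<lambda>t. Nz k \<omega> i t) {..<T k}) {..<n k}"
    and mean_zero: "\<And>k i t. i < n k \<Longrightarrow> t < T k \<Longrightarrow>
                  integrable (\<Omega> k) (\<lambda>\<omega>. Nz k \<omega> i t) \<and>
                  (\<integral>\<omega>. Nz k \<omega> i t \<partial>\<Omega> k) = 0"
    and subg: "\<And>k i. i < n k \<Longrightarrow>
                  subgaussian_vec (\<Omega> k) (T k) (\<lambda>\<omega>. Nz k \<omega> i) (nu k i)"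
    and n_O_T: "(\<lambda>k. real (n k)) \<in> O(\<lambda>k. real (T k))"
    and lam_bdd: "\<exists>c>0. \<forall>\<^sub>F k in sequentially. lam_min_nz (corr_mat (n k) (T k) (Zs k)) \<ge> c"
    and kappa_o_T: "(\<lambda>k. cond_number (corr_mat (n k) (T k) (Zs k))) \<in> o(\<lambda>k. real (T k))"
    and kappa_gamma: "(\<lambda>k. cond_number (corr_mat (n k) (T k) (Zs k)) * ln (real (T k))
                          / snr_gamma (n k) (T k) (Zs k) (nu k)) \<longlonglongrightarrow> 0"
  shows "\<forall>\<epsilon>>0. \<exists>C. \<forall>\<^sub>F k in sequentially.
           prob_space.prob (\<Omega> k)
             {\<omega> \<in> space (\<Omega> k). \<exists>i<n k. \<exists>j<n k.
                \<bar>sqrt (sig_power (T k) (Zs k i)) * sqrt (sig_power (T k) (Zs k j))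
                  / (sqrt (sig_power (T k) (\<lambda>t. Zs k i t + Nz k \<omega> i t))
                     * sqrt (sig_power (T k) (\<lambda>t. Zs k j t + Nz k \<omega> j t))) - 1\<bar>
                > C * (ln (real (n k)) / snr_gamma (n k) (T k) (Zs k) (nu k)
                       + sqrt (ln (real (n k)) / (real (T k) * snr_gamma (n k) (T k) (Zs k) (nu k)))) }
           \<le> \<epsilon>"
proof -
  define rate where "rate k = ln (real (n k)) / snr_gamma (n k) (T k) (Zs k) (nu k)
      + sqrt (ln (real (n k)) / (real (T k) * snr_gamma (n k) (T k) (Zs k) (nu k)))" for k
  have "rate \<longlonglongrightarrow> 0"
    unfolding rate_def using n_inf T_inf sig_pos nu_pos n_O_T lam_bdd kappa_gamma
    by (rule snr_rate_tendsto_0)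
  then have "(\<lambda>k. 4 * exp 3 * rate k) \<longlonglongrightarrow> 0"
    by (rule tendsto_mult_right_zero)
  then have small: "\<forall>\<^sub>F k in sequentially. 4 * exp 3 * rate k < 1 / 2"
    by (rule order_tendstoD(2)) simp
  have "\<forall>\<^sub>F k in sequentially. n k \<ge> 3" and "\<forall>\<^sub>F k in sequentially. T k \<ge> 1"
    using n_inf T_inf by (simp_all add: filterlim_at_top)
  with small have bound: "\<forall>\<^sub>F k in sequentially.
      prob_space.prob (\<Omega> k) {\<omega> \<in> space (\<Omega> k). \<exists>i<n k. \<exists>j<n k.
        \<bar>sqrt (sig_power (T k) (Zs k i)) * sqrt (sig_power (T k) (Zs k j))
          / (sqrt (sig_power (T k) (\<lambda>t. Zs k i t + Nz k \<omega> i t))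
             * sqrt (sig_power (T k) (\<lambda>t. Zs k j t + Nz k \<omega> j t))) - 1\<bar>
        > 8 * exp 3 * rate k} \<le> 4 / real (n k)"
    by eventually_elim (auto simp: rate_def intro: ratio_deviation_prob_le[OF prob _ _ sig_pos nu_pos subg])
  have "(\<lambda>k. 4 / real (n k)) \<longlonglongrightarrow> 0"
    by (intro tendsto_divide_0[OF tendsto_const] filterlim_at_top_imp_at_infinity
        filterlim_compose[OF filterlim_real_sequentially n_inf])
  then show ?thesis
    by (intro allI impI exI[of _ "8 * exp 3"] eventually_le_of_le_tendsto_0[OF bound[unfolded rate_def]])
qed

end
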